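(* Let $A(n)=\sum_{r=0}^n n!/r!$ for $n\ge0$ (so $A(n)/n!$ is the $n$th partial sum of $\sum_{r\ge0}1/r!$). Define $Q(0)=0$, $Q(1)=1$, $Q(n)=b(n)Q(n-1)+Q(n-2)$ for $n\ge2$, where $b(n)=2n/3$ if $3\mid n$ and $b(n)=1$ if $3\nmid n$. For an integer $x$ let $[x]_2$ be the largest power $2^k$ ($k\ge0$) dividing $x$, with $[0]_2=\infty$. Suppose that for every $n\ge 0$: (i) $[Q(3n)]_2\le 4[n(n+2)]_2$; (ii) $[Q(3n+1)]_2\le 2[n+1]_2$; (iii) $[Q(3n+2)]_2=1$; (iv) $[A(n)]_2\le (n+1)^2$. Then exactly two partial sums $A(m)/m!$ of the Taylor series $e=\sum_{r\ge0}1/r!$ are convergents of the simple continued fraction expansion of $e$.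
   Context: The convergents of $e$ are the rationals obtained by truncating the simple continued fraction $e=[2,1,2,1,1,4,1,1,6,1,1,8,\dots]$; their denominators are the $Q(n)$ above. A partial sum "is a convergent" if it equals one of these rationals. *)

theory Defs
  imports Complex_Main "HOL-Computational_Algebra.Primes" "HOL-Library.Extended_Nat"
begin

definition A :: "nat \<Rightarrow> nat" where
  "A n = (\<Sum>r\<le>n. fact n div fact r)"

definition b :: "nat \<Rightarrow> nat" where
  "b n = (if 3 dvd n then 2 * n div 3 else 1)"

fun Q :: "nat \<Rightarrow> nat" where
  "Q 0 = 0"
| "Q (Suc 0) = 1"
| "Q (Suc (Suc n)) = b (Suc (Suc n)) * Q (Suc n) + Q n"

definition pow2part :: "nat \<Rightarrow> enat" where
  "pow2part x = (if x = 0 then \<infinity> else (2::enat) ^ multiplicity (2::nat) x)"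

text \<open>Partial quotients of the simple continued fraction e = [2;1,2,1,1,4,1,1,6,...].\<close>
definition e_cf :: "nat \<Rightarrow> nat" where
  "e_cf k = (if k = 0 then 2 else if k mod 3 = 2 then 2 * (k + 1) div 3 else 1)"

fun cf_eval :: "nat list \<Rightarrow> rat" where
  "cf_eval [] = 0"
| "cf_eval [a] = of_nat a"
| "cf_eval (a # rest) = of_nat a + 1 / cf_eval rest"

definition e_convergent :: "nat \<Rightarrow> rat" where
  "e_convergent k = cf_eval (map e_cf [0..<Suc k])"

end

theory Submission
  imports Defs
begin

(* The k-th convergent of e is P(k+1)/Q(k+1) in lowest terms, where the numerators P obey the
   same recurrence as the denominators Q. If A(m)/m! equals it, then Q(k+1) divides m! and the
   cofactor m!/Q(k+1) divides A(m). Since Q grows like a factorial, k + 1 \<le> 3m + 4, so the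
   2-adic hypotheses bound [Q(k+1)]_2 linearly and [A(m)]_2 quadratically in m, whereas
   [m!]_2 \<ge> 2^(m/2 + m/4 + m/8) (rounded down). Hence m < 20, and a finite computation
   leaves only A(1)/1! = 2 and A(3)/3! = 8/3. *)

section \<open>Numerators and denominators of the convergents of e\<close>

fun P :: "nat \<Rightarrow> nat" where
  "P 0 = 1"
| "P (Suc 0) = 2"
| "P (Suc (Suc n)) = b (Suc (Suc n)) * P (Suc n) + P n"

(* cf_numden [a_0, ..., a_n] (x, y) is the numerator/denominator pair of [a_0; ..., a_n, x/y]. *)
fun cf_numden :: "nat list \<Rightarrow> nat \<times> nat \<Rightarrow> nat \<times> nat" where
  "cf_numden [] pq = pq"
| "cf_numden (a # as) pq = (case cf_numden as pq of (x, y) \<Rightarrow> (a * x + y, x))"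

lemma cf_numden_append: "cf_numden (xs @ ys) pq = cf_numden xs (cf_numden ys pq)"
  by (induction xs) auto

lemma cf_numden_linear:
  "cf_numden xs (p, q) =
     (p * fst (cf_numden xs (1, 0)) + q * fst (cf_numden xs (0, 1)),
      p * snd (cf_numden xs (1, 0)) + q * snd (cf_numden xs (0, 1)))"
  by (induction xs) (auto split: prod.split simp: algebra_simps)

lemma cf_numden_snoc:
  "cf_numden (xs @ [c]) (1, 0) =
     (c * fst (cf_numden xs (1, 0)) + fst (cf_numden xs (0, 1)),
      c * snd (cf_numden xs (1, 0)) + snd (cf_numden xs (0, 1)))"
  "cf_numden (xs @ [c]) (0, 1) = cf_numden xs (1, 0)"
  using cf_numden_linear[of xs c 1] by (simp_all add: cf_numden_append)

lemma cf_numden_fst_pos: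
  "xs \<noteq> [] \<Longrightarrow> \<forall>a\<in>set xs. 0 < a \<Longrightarrow> 0 < fst (cf_numden xs (1, 0))"
proof (induction xs)
  case (Cons a xs)
  then show ?case
    by (cases "xs = []") (auto split: prod.split)
qed simp

lemma cf_eval_eq_cf_numden:
  "xs \<noteq> [] \<Longrightarrow> \<forall>a\<in>set xs. 0 < a \<Longrightarrow>
   cf_eval xs = of_nat (fst (cf_numden xs (1, 0))) / of_nat (snd (cf_numden xs (1, 0)))"
proof (induction xs rule: cf_eval.induct)
  case (3 a c rest)
  obtain x y where xy: "cf_numden (c # rest) (1, 0) = (x, y)"
    by fastforce
  have "0 < x"
    using cf_numden_fst_pos[of "c # rest"] "3.prems" xy by simp
  have "cf_eval (a # c # rest) = of_nat a + 1 / (of_nat x / of_nat y)"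
    using "3.IH" "3.prems" xy by simp
  also have "\<dots> = of_nat (a * x + y) / of_nat x"
    using \<open>0 < x\<close> by (simp add: field_simps)
  finally show ?case
    using xy by simp
qed simp_all

lemma e_cf_Suc: "e_cf (Suc n) = b (Suc (Suc n))"
  unfolding e_cf_def b_def by (auto, presburger+)

lemma e_cf_pos: "0 < e_cf k"
  unfolding e_cf_def by auto

lemma b_pos: "0 < n \<Longrightarrow> 0 < b n"
  unfolding b_def by (auto elim!: dvdE)

lemma cf_numden_e_cf: "cf_numden (map e_cf [0..<n]) (1, 0) = (P n, Q n)"
proof (induction n rule: P.induct)
  case 1
  then show ?case by simp
next
  case 2
  then show ?case by (simp add: e_cf_def)
next
  case (3 n)
  define xs where "xs = map e_cf [0..<Suc n]"
  have "cf_numden xs (0, 1) = (P n, Q n)"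
    using "3.IH"(2) cf_numden_snoc(2)[of "map e_cf [0..<n]" "e_cf n"] by (simp add: xs_def)
  moreover have "cf_numden xs (1, 0) = (P (Suc n), Q (Suc n))"
    using "3.IH"(1) by (simp add: xs_def)
  moreover have "map e_cf [0..<Suc (Suc n)] = xs @ [e_cf (Suc n)]"
    by (simp add: xs_def)
  ultimately show ?case
    by (simp only: cf_numden_snoc(1) e_cf_Suc fst_conv snd_conv P.simps(3) Q.simps(3))
qed

lemma e_convergent_eq: "e_convergent k = of_nat (P (Suc k)) / of_nat (Q (Suc k))"
  unfolding e_convergent_def
  using cf_eval_eq_cf_numden[of "map e_cf [0..<Suc k]"] cf_numden_e_cf[of "Suc k"]
  by (simp add: e_cf_pos del: upt_Suc)

lemma P_Q_det: "int (P (Suc n)) * int (Q n) - int (P n) * int (Q (Suc n)) = (-1) ^ Suc n"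
proof (induction n)
  case (Suc n)
  have "int (P (Suc (Suc n))) * int (Q (Suc n)) - int (P (Suc n)) * int (Q (Suc (Suc n))) =
        - (int (P (Suc n)) * int (Q n) - int (P n) * int (Q (Suc n)))"
    by (simp add: algebra_simps)
  then show ?case
    using Suc.IH by simp
qed simp

lemma coprime_P_Q: "coprime (P n) (Q n)"
proof (rule coprimeI)
  fix d
  assume "d dvd P n" "d dvd Q n"
  then have "int d dvd int (P (Suc n)) * int (Q n) - int (P n) * int (Q (Suc n))"
    by (intro dvd_diff) (simp_all add: int_dvd_int_iff)
  then have "int d dvd (-1) ^ Suc n"
    by (simp only: P_Q_det)
  moreover have "is_unit ((-1 :: int) ^ Suc n)"
    by simp
  ultimately have "is_unit (int d)"
    by (rule dvd_unit_imp_unit)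
  then show "is_unit d"
    by simp
qed

lemma Q_le_P: "2 * Q n \<le> P n"
proof (induction n rule: P.induct)
  case (3 n)
  have "2 * Q (Suc (Suc n)) = b (Suc (Suc n)) * (2 * Q (Suc n)) + 2 * Q n"
    by (simp add: algebra_simps)
  also have "\<dots> \<le> b (Suc (Suc n)) * P (Suc n) + P n"
    using "3.IH" by (intro add_mono mult_le_mono2)
  finally show ?case
    by simp
qed simp_all

lemma Q_rec: "2 \<le> n \<Longrightarrow> Q n = b n * Q (n - 1) + Q (n - 2)"
  by (cases n rule: Q.cases) auto

lemma Q_Suc_mono: "Q n \<le> Q (Suc n)"
proof (cases n)
  case (Suc k)
  have "Q (Suc k) \<le> b (Suc (Suc k)) * Q (Suc k)"
    using b_pos[of "Suc (Suc k)"] by simp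
  then show ?thesis
    using Suc by (simp add: trans_le_add1)
qed simp

lemma Q_mono: "m \<le> n \<Longrightarrow> Q m \<le> Q n"
  using Q_Suc_mono by (rule lift_Suc_mono_le)

lemma Q_pos: "0 < n \<Longrightarrow> 0 < Q n"
  using Q_mono[of 1 n] by simp

lemma e_convergent_ge_2: "2 \<le> e_convergent k"
proof -
  have "(0 :: rat) < of_nat (Q (Suc k))"
    by (simp add: Q_pos)
  moreover have "2 * of_nat (Q (Suc k)) \<le> (of_nat (P (Suc k)) :: rat)"
    using Q_le_P[of "Suc k"] of_nat_le_iff[of "2 * Q (Suc k)" "P (Suc k)", where 'a = rat] by simp
  ultimately show ?thesis
    unfolding e_convergent_eq by (simp only: pos_le_divide_eq mult.commute)
qed

lemma Q_growth: "2 ^ n * fact n \<le> Q (3 * n + 2)"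
proof (induction n)
  case 0
  then show ?case by (simp add: b_def)
next
  case (Suc n)
  have "2 ^ Suc n * fact (Suc n) = (2 * n + 2) * (2 ^ n * fact n)"
    by (simp add: algebra_simps)
  also have "\<dots> \<le> (2 * n + 2) * Q (3 * n + 2)"
    using Suc.IH by (rule mult_le_mono2)
  also have "\<dots> \<le> Q (3 * n + 3)"
    using Q_rec[of "3 * n + 3"] by (simp add: b_def)
  also have "\<dots> \<le> Q (3 * Suc n + 2)"
    by (rule Q_mono) simp
  finally show ?case .
qed

lemma Q_dvd_fact_index_le: "Q K dvd fact m \<Longrightarrow> K \<le> 3 * m + 4"
proof (rule ccontr)
  assume "Q K dvd fact m" "\<not> K \<le> 3 * m + 4"
  have "(fact m :: nat) \<le> fact (m + 1)"
    by (rule fact_mono) simp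
  also have "\<dots> < 2 ^ (m + 1) * fact (m + 1)"
    using one_less_power[of "2 :: nat" "m + 1"] by (intro n_less_m_mult_n) auto
  also have "\<dots> \<le> Q (3 * (m + 1) + 2)"
    by (rule Q_growth)
  also have "\<dots> \<le> Q K"
    using \<open>\<not> K \<le> 3 * m + 4\<close> by (intro Q_mono) simp
  also have "\<dots> \<le> fact m"
    using \<open>Q K dvd fact m\<close> by (simp add: dvd_imp_le)
  finally show False
    by simp
qed

section \<open>The case m < 20\<close>

(* Tabulating Q and A by their recurrences lets the simplifier evaluate them on numerals in
   linear time (unfolding Q itself is exponential). One_nat_def is removed from the simpset
   in these evaluations so that indices stay numerals instead of becoming Suc towers. *)
fun Q_from :: "nat \<Rightarrow> nat \<Rightarrow> nat \<Rightarrow> nat \<Rightarrow> nat list" where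
  "Q_from n k x y = (if n = 0 then [] else x # Q_from (n - 1) (k + 1) y (b (k + 2) * y + x))"

declare Q_from.simps [simp del]

lemma Q_from_eq: "Q_from n k (Q k) (Q (Suc k)) = map Q [k..<k + n]"
proof (induction n arbitrary: k)
  case (Suc n)
  have "[k..<k + Suc n] = k # [Suc k..<Suc k + n]"
    by (simp add: upt_rec)
  then show ?case
    using Suc.IH[of "Suc k"] by (subst Q_from.simps) simp
qed (simp add: Q_from.simps)

lemma Q_from_62_dvd_fact_19:
  "list_all (\<lambda>q. q dvd fact 19 \<longrightarrow> q \<in> {1, 3, 4, 7, 32, 39, 1001}) (Q_from 62 0 0 1)"
  by (simp del: One_nat_def add: Q_from.simps b_def fact_numeral)

lemma Q_dvd_fact_19: "K < 62 \<Longrightarrow> Q K dvd fact 19 \<Longrightarrow> Q K \<in> {1, 3, 4, 7, 32, 39, 1001}"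
  using Q_from_62_dvd_fact_19 Q_from_eq[of 62 0] by (simp add: list_all_iff)

lemma A_Suc: "A (Suc n) = Suc n * A n + 1"
proof -
  have "A (Suc n) = (\<Sum>r\<le>n. fact (Suc n) div fact r) + 1"
    unfolding A_def by simp
  also have "(\<Sum>r\<le>n. fact (Suc n) div fact r) = (\<Sum>r\<le>n. Suc n * (fact n div fact r))"
    by (intro sum.cong refl) (simp add: div_mult_swap fact_dvd)
  finally show ?thesis
    by (simp add: A_def sum_distrib_left)
qed

lemma A_0: "A 0 = 1"
  by (simp add: A_def)

fun A_fact_from :: "nat \<Rightarrow> nat \<Rightarrow> nat \<Rightarrow> nat \<Rightarrow> (nat \<times> nat \<times> nat) list" where
  "A_fact_from n m f a =
     (if n = 0 then [] else (m, f, a) # A_fact_from (n - 1) (m + 1) ((m + 1) * f) ((m + 1) * a + 1))"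

declare A_fact_from.simps [simp del]

lemma A_fact_from_eq:
  "A_fact_from n m (fact m) (A m) = map (\<lambda>j. (j, fact j, A j)) [m..<m + n]"
proof (induction n arbitrary: m)
  case (Suc n)
  have "[m..<m + Suc n] = m # [Suc m..<Suc m + n]"
    by (simp add: upt_rec)
  then show ?case
    using Suc.IH[of "Suc m"] by (subst A_fact_from.simps) (simp add: A_Suc)
qed (simp add: A_fact_from.simps)

lemma A_fact_from_20_cofactor:
  "list_all (\<lambda>(m, f, a). \<forall>q \<in> {1, 3, 4, 7, 32, 39, 1001}. q dvd f \<longrightarrow> f div q dvd a \<longrightarrow> m \<in> {0, 1, 3})
     (A_fact_from 20 0 1 1)"
  by (simp del: One_nat_def add: A_fact_from.simps)

lemma Q_cofactor_dvd_A_small: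
  assumes "m < 20" "Q K dvd fact m" "fact m div Q K dvd A m"
  shows "m \<in> {0, 1, 3}"
proof -
  have "fact m dvd (fact 19 :: nat)"
    using assms(1) by (simp add: fact_dvd)
  with assms(2) have "Q K dvd fact 19"
    by (rule dvd_trans)
  moreover have "K < 62"
    using Q_dvd_fact_index_le[OF assms(2)] assms(1) by linarith
  ultimately have Q_K: "Q K \<in> {1, 3, 4, 7, 32, 39, 1001}"
    by (rule Q_dvd_fact_19[rotated])
  have "(m, fact m, A m) \<in> set (map (\<lambda>j. (j, fact j, A j)) [0..<0 + 20])"
    using assms(1) by (simp only: set_map) (rule imageI, simp)
  then have "(m, fact m, A m) \<in> set (A_fact_from 20 0 1 1)"
    by (simp only: A_fact_from_eq[of 20 0, unfolded fact_0 A_0])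
  with A_fact_from_20_cofactor[unfolded list_all_iff]
  have "case (m, fact m, A m) of (m, f, a) \<Rightarrow>
          \<forall>q \<in> {1, 3, 4, 7, 32, 39, 1001}. q dvd f \<longrightarrow> f div q dvd a \<longrightarrow> m \<in> {0, 1, 3}"
    by (rule bspec)
  then have "\<forall>q \<in> {1, 3, 4, 7, 32, 39, 1001}. q dvd fact m \<longrightarrow> fact m div q dvd A m \<longrightarrow> m \<in> {0, 1, 3}"
    by (simp only: prod.case)
  then have "Q K dvd fact m \<longrightarrow> fact m div Q K dvd A m \<longrightarrow> m \<in> {0, 1, 3}"
    using Q_K by (rule bspec)
  then show ?thesis
    using assms(2,3) by (rule mp[THEN mp])
qed

section \<open>The case m \<ge> 20: counting factors 2\<close>

lemma enat_numeral_power: "(numeral k :: enat) ^ n = enat (numeral k ^ n)"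
  by (induction n) (simp_all add: numeral_eq_enat one_enat_def)

lemma pow2part_eq: "0 < x \<Longrightarrow> pow2part x = enat (2 ^ multiplicity 2 x)"
  by (simp add: pow2part_def enat_numeral_power)

lemma pow2_multiplicity_le: "0 < x \<Longrightarrow> 2 ^ multiplicity 2 x \<le> (x :: nat)"
  by (simp add: dvd_imp_le multiplicity_dvd)

lemma pow2_multiplicity_mult:
  fixes x y :: nat
  shows "0 < x \<Longrightarrow> 0 < y \<Longrightarrow> (2 :: nat) ^ multiplicity 2 (x * y) = 2 ^ multiplicity 2 x * 2 ^ multiplicity 2 y"
  by (simp add: prime_elem_multiplicity_mult_distrib power_add)

(* n and n + 2 are never both divisible by 4. *)
lemma pow2_multiplicity_mult_add_2_le:
  assumes "0 < n"
  shows "2 ^ multiplicity 2 (n * (n + 2)) \<le> 2 * (n + 2 :: nat)"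
proof -
  have "multiplicity 2 n \<le> 1 \<or> multiplicity 2 (n + 2) \<le> (1 :: nat)"
  proof (rule ccontr)
    assume "\<not> ?thesis"
    then have "2 \<le> multiplicity 2 n" "2 \<le> multiplicity 2 (n + 2 :: nat)"
      by simp_all
    then have "4 dvd n" "4 dvd (n + 2 :: nat)"
      using multiplicity_dvd'[of 2 2 n] multiplicity_dvd'[of 2 2 "n + 2"] by simp_all
    then show False
      by presburger
  qed
  moreover have prod: "(2 :: nat) ^ multiplicity 2 (n * (n + 2)) = 2 ^ multiplicity 2 n * 2 ^ multiplicity 2 (n + 2)"
    using assms by (intro pow2_multiplicity_mult) simp_all
  ultimately show ?thesis
  proof (elim disjE)
    assume "multiplicity 2 n \<le> 1"
    then have "2 ^ multiplicity 2 n \<le> (2 :: nat)"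
      using power_increasing[of _ 1 "2 :: nat"] by simp
    moreover have "2 ^ multiplicity 2 (n + 2) \<le> n + 2"
      by (rule pow2_multiplicity_le) simp
    ultimately show ?thesis
      unfolding prod by (rule mult_le_mono)
  next
    assume "multiplicity 2 (n + 2) \<le> 1"
    then have "2 ^ multiplicity 2 (n + 2) \<le> (2 :: nat)"
      using power_increasing[of _ 1 "2 :: nat"] by simp
    moreover have "2 ^ multiplicity 2 n \<le> n"
      using assms by (rule pow2_multiplicity_le)
    ultimately have "2 ^ multiplicity 2 n * 2 ^ multiplicity 2 (n + 2) \<le> n * 2"
      by (intro mult_le_mono)
    then show ?thesis
      unfolding prod by simp
  qed
qed

lemma pow2_multiplicity_Q_le:
  assumes i: "\<forall>n. pow2part (Q (3*n)) \<le> 4 * pow2part (n * (n + 2))"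
    and ii: "\<forall>n. pow2part (Q (3*n+1)) \<le> 2 * pow2part (n + 1)"
    and iii: "\<forall>n. pow2part (Q (3*n+2)) = 1"
    and "0 < K"
  shows "(2 :: nat) ^ multiplicity 2 (Q K) \<le> 8 * (K div 3 + 2)"
proof -
  define n where "n = K div 3"
  have K: "K = 3 * n + K mod 3"
    by (simp add: n_def)
  have "0 < Q K"
    using \<open>0 < K\<close> by (rule Q_pos)
  consider "K mod 3 = 0" | "K mod 3 = 1" | "K mod 3 = 2"
    by linarith
  then show ?thesis
  proof cases
    case 1
    then have "K = 3 * n" "0 < n"
      using K \<open>0 < K\<close> by simp_all
    then have "(2 :: nat) ^ multiplicity 2 (Q K) \<le> 4 * 2 ^ multiplicity 2 (n * (n + 2))"
      using i[rule_format, of n] \<open>0 < Q K\<close> by (simp add: pow2part_eq numeral_eq_enat)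
    also have "\<dots> \<le> 8 * (n + 2)"
      using pow2_multiplicity_mult_add_2_le[OF \<open>0 < n\<close>] by simp
    finally show ?thesis
      by (simp add: n_def)
  next
    case 2
    then have "(2 :: nat) ^ multiplicity 2 (Q K) \<le> 2 * 2 ^ multiplicity 2 (n + 1)"
      using K ii[rule_format, of n] \<open>0 < Q K\<close> by (simp add: pow2part_eq numeral_eq_enat)
    also have "\<dots> \<le> 2 * (n + 1)"
      using pow2_multiplicity_le[of "n + 1"] by simp
    finally show ?thesis
      by (simp add: n_def)
  next
    case 3
    then show ?thesis
      using K iii[rule_format, of n] \<open>0 < Q K\<close> by (simp add: pow2part_eq one_enat_def)
  qed
qed

lemma pow2_mult_fact_dvd_fact_double: "2 ^ k * fact k dvd (fact (2 * k) :: nat)"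
proof (induction k)
  case (Suc k)
  have "fact (2 * Suc k) = (2 * k + 2) * ((2 * k + 1) * (fact (2 * k) :: nat))"
    by (simp add: algebra_simps)
  moreover have "2 ^ Suc k * fact (Suc k) = (2 * k + 2) * (2 ^ k * (fact k :: nat))"
    by (simp add: algebra_simps)
  moreover have "2 ^ k * fact k dvd (2 * k + 1) * (fact (2 * k) :: nat)"
    using Suc.IH by (rule dvd_mult)
  ultimately show ?case
    by (simp only: mult_dvd_mono[OF dvd_refl])
qed simp

lemma pow2_mult_fact_half_dvd_fact: "2 ^ (m div 2) * fact (m div 2) dvd (fact m :: nat)"
  using pow2_mult_fact_dvd_fact_double[of "m div 2"] fact_dvd[of "2 * (m div 2)" m]
  by (auto intro: dvd_trans)

(* The first three terms of Legendre's formula for the exponent of 2 in m!. *)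
lemma pow2_legendre_dvd_fact: "2 ^ (m div 2 + m div 4 + m div 8) dvd (fact m :: nat)"
proof -
  have "m div 2 div 2 = m div 4" "m div 4 div 2 = m div 8"
    by (simp_all add: div_mult2_eq)
  then have "2 ^ (m div 4) * fact (m div 4) dvd (fact (m div 2) :: nat)"
    and "2 ^ (m div 8) dvd (fact (m div 4) :: nat)"
    using pow2_mult_fact_half_dvd_fact[of "m div 2"] pow2_mult_fact_half_dvd_fact[of "m div 4"]
    by (auto dest: dvd_mult_left)
  then have "2 ^ (m div 4) * 2 ^ (m div 8) dvd (fact (m div 2) :: nat)"
    by (meson dvd_trans mult_dvd_mono dvd_refl)
  then have "2 ^ (m div 2) * (2 ^ (m div 4) * 2 ^ (m div 8)) dvd (fact m :: nat)"
    using pow2_mult_fact_half_dvd_fact[of m] by (meson dvd_trans mult_dvd_mono dvd_refl)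
  then show ?thesis
    by (simp add: power_add mult.assoc)
qed

(* Going from m to m + 8 adds 7 to the exponent, while the left side grows by a factor below 100. *)
lemma cubic_less_pow2_legendre:
  "20 \<le> m \<Longrightarrow> 8 * (m + 3) * (m + 1) ^ 2 < (2 :: nat) ^ (m div 2 + m div 4 + m div 8)"
proof (induction m rule: less_induct)
  case (less m)
  show ?case
  proof (cases "m < 28")
    case True
    then consider "m = 20" | "m = 21" | "m = 22" | "m = 23" | "m = 24" | "m = 25" | "m = 26" | "m = 27"
      using less.prems by linarith
    then show ?thesis
      by cases simp_all
  next
    case False
    define l where "l = m - 8"
    have m: "m = l + 8" "20 \<le> l"
      using False by (simp_all add: l_def)
    have "(l + 8) div 2 = l div 2 + 4" "(l + 8) div 4 = l div 4 + 2" "(l + 8) div 8 = l div 8 + 1"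
      by linarith+
    then have exp: "m div 2 + m div 4 + m div 8 = (l div 2 + l div 4 + l div 8) + 7"
      unfolding m(1) by simp
    have "(l + 9) ^ 2 \<le> (5 * (l + 1)) ^ 2"
      using m(2) by (intro power_mono) simp_all
    also have "\<dots> = 25 * (l + 1) ^ 2"
      by (simp only: power_mult_distrib) simp
    finally have "(l + 9) ^ 2 \<le> 25 * (l + 1) ^ 2" .
    then have "8 * (l + 11) * (l + 9) ^ 2 \<le> 8 * (4 * (l + 3)) * (25 * (l + 1) ^ 2)"
      by (intro mult_le_mono) simp_all
    also have "\<dots> = 100 * (8 * (l + 3) * (l + 1) ^ 2)"
      by simp
    also have "\<dots> < 100 * 2 ^ (l div 2 + l div 4 + l div 8)"
      using less.IH[of l] m by simp
    also have "\<dots> < 2 ^ (l div 2 + l div 4 + l div 8 + 7)"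
      by (simp add: power_add)
    finally show ?thesis
      using exp m(1) by (simp add: add.commute)
  qed
qed

lemma A_pos: "0 < A m"
  using A_Suc[of "m - 1"] by (cases m) (simp_all add: A_0)

lemma Q_cofactor_dvd_A_large:
  assumes i: "\<forall>n. pow2part (Q (3*n)) \<le> 4 * pow2part (n * (n + 2))"
    and ii: "\<forall>n. pow2part (Q (3*n+1)) \<le> 2 * pow2part (n + 1)"
    and iii: "\<forall>n. pow2part (Q (3*n+2)) = 1"
    and iv: "\<forall>n. pow2part (A n) \<le> of_nat ((n + 1)^2)"
    and "20 \<le> m" "Q K dvd fact m" "fact m div Q K dvd A m"
  shows False
proof -
  define r where "r = fact m div Q K"
  have "0 < K"
    using \<open>Q K dvd fact m\<close> by (cases K) auto
  then have "0 < Q K"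
    by (rule Q_pos)
  have fact_m: "fact m = Q K * r"
    using \<open>Q K dvd fact m\<close> by (simp add: r_def)
  then have "0 < r"
    by (metis fact_nonzero mult_0_right neq0_conv)
  have "K div 3 \<le> (3 * m + 4) div 3"
    using Q_dvd_fact_index_le[OF \<open>Q K dvd fact m\<close>] by (rule div_le_mono)
  then have "(2 :: nat) ^ multiplicity 2 (Q K) \<le> 8 * (m + 3)"
    using pow2_multiplicity_Q_le[OF i ii iii \<open>0 < K\<close>] by simp
  moreover have "(2 :: nat) ^ multiplicity 2 r \<le> (m + 1) ^ 2"
  proof -
    have "multiplicity 2 r \<le> multiplicity 2 (A m)"
      using \<open>fact m div Q K dvd A m\<close> A_pos[of m] by (intro dvd_imp_multiplicity_le) (simp_all add: r_def)
    then have "2 ^ multiplicity 2 r \<le> (2 :: nat) ^ multiplicity 2 (A m)"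
      by (rule power_increasing) simp
    also have "\<dots> \<le> (m + 1) ^ 2"
      using iv[rule_format, of m] A_pos[of m] by (simp add: pow2part_eq of_nat_eq_enat)
    finally show ?thesis .
  qed
  ultimately have "(2 :: nat) ^ multiplicity 2 (fact m :: nat) \<le> 8 * (m + 3) * (m + 1) ^ 2"
    using fact_m \<open>0 < r\<close> \<open>0 < Q K\<close> by (simp add: pow2_multiplicity_mult mult_le_mono)
  moreover have "m div 2 + m div 4 + m div 8 \<le> multiplicity 2 (fact m :: nat)"
    by (intro multiplicity_geI pow2_legendre_dvd_fact) auto
  then have "(2 :: nat) ^ (m div 2 + m div 4 + m div 8) \<le> 2 ^ multiplicity 2 (fact m :: nat)"
    by (rule power_increasing) simp
  ultimately show False
    using cubic_less_pow2_legendre[OF \<open>20 \<le> m\<close>] by linarith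
qed

section \<open>Partial sums that are convergents\<close>

lemma reduced_fraction_dvd:
  fixes a f p q :: nat
  assumes eq: "of_nat a / of_nat f = (of_nat p / of_nat q :: 'a :: field_char_0)"
    and "coprime p q" "0 < q" "0 < f"
  shows "q dvd f" "f div q dvd a"
proof -
  have "(of_nat (a * q) :: 'a) = of_nat (p * f)"
    using eq assms(3,4) by (simp add: field_simps)
  then have aq: "a * q = p * f"
    by (simp only: of_nat_eq_iff)
  then have "q dvd p * f"
    by (metis dvd_triv_right)
  with \<open>coprime p q\<close> show "q dvd f"
    using coprime_commute coprime_dvd_mult_right_iff by blast
  then obtain r where r: "f = q * r" ..
  then have "a = p * r"
    using aq \<open>0 < q\<close> by (simp add: ac_simps)
  then show "f div q dvd a"
    using r \<open>0 < q\<close> by simp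
qed

lemma partial_sum_eq_e_convergent_cases:
  assumes i: "\<forall>n. pow2part (Q (3*n)) \<le> 4 * pow2part (n * (n + 2))"
    and ii: "\<forall>n. pow2part (Q (3*n+1)) \<le> 2 * pow2part (n + 1)"
    and iii: "\<forall>n. pow2part (Q (3*n+2)) = 1"
    and iv: "\<forall>n. pow2part (A n) \<le> of_nat ((n + 1)^2)"
    and conv: "of_nat (A m) / fact m = e_convergent k"
  shows "m \<in> {1, 3}"
proof -
  have "of_nat (A m) / of_nat (fact m) = (of_nat (P (Suc k)) / of_nat (Q (Suc k)) :: rat)"
    using conv by (simp add: e_convergent_eq)
  note dvd = reduced_fraction_dvd[OF this coprime_P_Q Q_pos[OF zero_less_Suc] fact_gt_zero]
  have "m \<noteq> 0"
  proof
    assume "m = 0"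
    then have "e_convergent k = 1"
      using conv by (simp add: A_0)
    then show False
      using e_convergent_ge_2[of k] by simp
  qed
  show ?thesis
  proof (cases "m < 20")
    case True
    then show ?thesis
      using Q_cofactor_dvd_A_small[OF True dvd] \<open>m \<noteq> 0\<close> by simp
  next
    case False
    then show ?thesis
      using Q_cofactor_dvd_A_large[OF i ii iii iv _ dvd] by simp
  qed
qed

theorem theoremA4:
  assumes i: "\<forall>n. pow2part (Q (3*n)) \<le> 4 * pow2part (n * (n + 2))"
    and ii: "\<forall>n. pow2part (Q (3*n+1)) \<le> 2 * pow2part (n + 1)"
    and iii: "\<forall>n. pow2part (Q (3*n+2)) = 1"
    and iv: "\<forall>n. pow2part (A n) \<le> of_nat ((n + 1)^2)"
  shows "card {m. \<exists>k. of_nat (A m) / fact m = e_convergent k} = 2"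
proof -
  have "of_nat (A 1) / fact 1 = e_convergent 0"
    using A_Suc[of 0] by (simp add: A_0 e_convergent_eq)
  moreover have "of_nat (A 3) / fact 3 = e_convergent 2"
  proof -
    have "A 3 = 16"
      using A_Suc[of 0] A_Suc[of 1] A_Suc[of 2] by (simp add: A_0 numeral_eq_Suc)
    moreover have "[0..<Suc 2] = [0, 1, 2 :: nat]"
      by (simp add: upt_rec)
    ultimately show ?thesis
      by (simp add: e_convergent_def e_cf_def fact_numeral)
  qed
  ultimately have "{m. \<exists>k. of_nat (A m) / fact m = e_convergent k} = {1, 3}"
    using partial_sum_eq_e_convergent_cases[OF i ii iii iv] by blast
  then show ?thesis
    by simp
qed

end
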